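(* Let $A\in\mathbb R^{d\times d}$ and $V\in\mathbb R^{k\times d}$ be nonzero matrices, $n\in\mathbb N$, and let $f^m$ be masked self-attention with parameters $(A,V)$. Let $\mathcal E^m_A\subset\overline B(0,1)^n$ be the set of sequences $(x_1,\dots,x_n)$ such that for every $i\in\{1,\dots,n\}$ the maximum $\max_{1\le j\le i}x_i^\top A^\top x_j$ is attained at a unique index $j$. Then the complement of $\mathcal E^m_A$ in $\overline B(0,1)^n$ has zero Lebesgue measure, and for every $X\in\mathcal E^m_A$ there exists $\theta:[0,+\infty)\to[0,+\infty)$ with $\theta(R)\to1$ exponentially fast as $R\to+\infty$ such that, for all $R\ge0$, $$\|D_{RX}f^m\|_2\le\theta(R)\|V\|_2\sqrt n.$$
   Context: Masked self-attention: for $X=(x_1,\dots,x_n)\in(\mathbb R^d)^n$, $f^m(X)_i=V\sum_{j=1}^iP_{ij}x_j$ with $P_{ij}=\exp(x_i^\top A^\top x_j)/\sum_{l=1}^i\exp(x_i^\top A^\top x_l)$ for $j\le i$. $\overline B(0,1)$ is the closed unit ball of $\mathbb R^d$; $RX=(Rx_1,\dots,Rx_n)$. $D_Xf^m$ is the differential at $X$, and $\|D_Xf^m\|_2$ its operator norm with respect to the Frobenius norms $\|X\|_F=(\sum_i|x_i|^2)^{1/2}$; $\|V\|_2$ is the spectral norm. *)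

theory Defs
  imports "HOL-Analysis.Analysis"
begin

text \<open>Sequences X = (x_1,...,x_n) of vectors in R^d are elements of real^'d^'n,
  where the index type 'n is a finite linearly ordered type (order-isomorphic to {1..n},
  n = CARD('n)). The norm on real^'d^'n is the Frobenius norm.\<close>

definition attn_score :: "real^'d^'d \<Rightarrow> real^'d^'n \<Rightarrow> 'n \<Rightarrow> 'n \<Rightarrow> real" where
  "attn_score A X i j = (A *v (X $ i)) \<bullet> (X $ j)"  (* = x_i^T A^T x_j *)

definition masked_P :: "real^'d^'d \<Rightarrow> real^'d^('n::{finite,linorder}) \<Rightarrow> 'n \<Rightarrow> 'n \<Rightarrow> real" where
  "masked_P A X i j =
     exp (attn_score A X i j) / (\<Sum>l\<in>{l. l \<le> i}. exp (attn_score A X i l))"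

definition masked_attention ::
  "real^'d^'d \<Rightarrow> real^'d^'k \<Rightarrow> real^'d^('n::{finite,linorder}) \<Rightarrow> real^'k^('n::{finite,linorder})" where
  "masked_attention A V X = (\<chi> i. V *v (\<Sum>j\<in>{j. j \<le> i}. masked_P A X i j *\<^sub>R (X $ j)))"

definition spectral_norm :: "real^'a^'b \<Rightarrow> real" where
  "spectral_norm M = onorm (\<lambda>x. M *v x)"

definition unit_ball_seq :: "(real^'d^'n) set" where
  "unit_ball_seq = {X. \<forall>i. X $ i \<in> cball 0 1}"

definition E_masked :: "real^'d^'d \<Rightarrow> (real^'d^('n::{finite,linorder})) set" where
  "E_masked A = {X \<in> unit_ball_seq.
     \<forall>i. \<exists>!j. j \<le> i \<and> (\<forall>l. l \<le> i \<longrightarrow> attn_score A X i l \<le> attn_score A X i j)}"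

end

theory Submission imports Defs begin

text \<open>Scaling the input by \<open>R\<close> multiplies all attention scores by \<open>R\<^sup>2\<close>. If every row of
  scores of \<open>X\<close> has a unique maximum, with gap \<open>g > 0\<close> to the other entries, then at \<open>R X\<close>
  each softmax row is concentrated on its argmax: every product \<open>P\<^sub>i\<^sub>j P\<^sub>i\<^sub>l\<close> with \<open>j \<noteq> l\<close> is at most
  \<open>exp (-g R\<^sup>2)\<close>. The derivative of masked attention is \<open>V\<close> applied to a convex combination of
  the perturbation tokens, plus terms carrying such products with a factor \<open>O(R\<^sup>2)\<close>; hence its
  norm is at most \<open>(1 + O(R\<^sup>2 exp (-g R\<^sup>2))) \<parallel>V\<parallel> \<surd>n\<close>.
  Sequences with a tie \<open>x\<^sub>i\<^sup>T A\<^sup>T x\<^sub>j = x\<^sub>i\<^sup>T A\<^sup>T x\<^sub>l\<close> form a null set: outside a hyperplane the tie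
  set is starlike, since the score difference is quadratic along suitable rays.\<close>

section \<open>Derivative of masked attention\<close>

lemma bounded_linear_axis: "bounded_linear (axis i :: 'a::real_normed_vector \<Rightarrow> 'a^'n)"
proof
  show "axis i (x + y) = axis i x + axis i y" for x y :: 'a
    by (simp add: axis_def vec_eq_iff)
  show "axis i (r *\<^sub>R x) = r *\<^sub>R axis i x" for r and x :: 'a
    by (simp add: axis_def vec_eq_iff)
  show "\<exists>K. \<forall>x. norm (axis i x :: 'a^'n) \<le> norm x * K"
  proof (intro exI allI)
    fix x :: 'a
    have "norm (axis i x :: 'a^'n) \<le> (\<Sum>k\<in>UNIV. norm ((axis i x :: 'a^'n)$k))"
      unfolding norm_vec_def by (rule L2_set_le_sum) simp
    also have "\<dots> = norm x" by (simp add: axis_def if_distrib cong: if_cong)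
    finally show "norm (axis i x :: 'a^'n) \<le> norm x * 1" by simp
  qed
qed

lemma has_derivative_vec_lambda:
  fixes f :: "'i::finite \<Rightarrow> 'a::real_normed_vector \<Rightarrow> 'b::real_normed_vector"
  assumes "\<And>i. (f i has_derivative f' i) F"
  shows "((\<lambda>x. \<chi> i. f i x) has_derivative (\<lambda>h. \<chi> i. f' i h)) F"
proof -
  have sum_axis: "(\<chi> i. v i) = (\<Sum>i\<in>UNIV. axis i (v i))" for v :: "'i \<Rightarrow> 'b"
    by (simp add: vec_eq_iff axis_def if_distrib)
  show ?thesis
    unfolding sum_axis
    by (intro has_derivative_sum bounded_linear.has_derivative[OF bounded_linear_axis] assms)
qed

lemma norm_vec_le_sqrt_card:
  fixes x :: "'a::real_normed_vector^'n"
  assumes "\<And>i. norm (x$i) \<le> b"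
  shows "norm x \<le> sqrt (real CARD('n)) * b"
proof -
  have "0 \<le> b" using assms[of undefined] norm_ge_zero order_trans by blast
  moreover have "norm x \<le> L2_set (\<lambda>i. b) (UNIV :: 'n set)"
    unfolding norm_vec_def by (rule L2_Norm.L2_set_mono) (use assms in auto)
  ultimately show ?thesis by (simp add: L2_set_constant)
qed

lemma spectral_norm_nonneg: "0 \<le> spectral_norm M"
  unfolding spectral_norm_def by (rule onorm_pos_le) simp

lemma norm_matrix_vector_le: "norm (M *v x) \<le> spectral_norm M * norm x"
  unfolding spectral_norm_def by (rule onorm[OF matrix_vector_mul_bounded_linear])

definition score_deriv :: "real^'d^'d \<Rightarrow> real^'d^'n \<Rightarrow> 'n \<Rightarrow> 'n \<Rightarrow> real^'d^'n \<Rightarrow> real" where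
  "score_deriv A Y i j H = (A *v H$i) \<bullet> Y$j + (A *v Y$i) \<bullet> H$j"

definition masked_P_deriv ::
  "real^'d^'d \<Rightarrow> real^'d^('n::{finite,linorder}) \<Rightarrow> 'n \<Rightarrow> 'n \<Rightarrow> real^'d^('n::{finite,linorder}) \<Rightarrow> real" where
  "masked_P_deriv A Y i j H =
     masked_P A Y i j * (score_deriv A Y i j H - (\<Sum>l\<in>{l. l \<le> i}. masked_P A Y i l * score_deriv A Y i l H))"

definition masked_attention_deriv ::
  "real^'d^'d \<Rightarrow> real^'d^'k \<Rightarrow> real^'d^('n::{finite,linorder}) \<Rightarrow> real^'d^('n::{finite,linorder}) \<Rightarrow> real^'k^('n::{finite,linorder})" where
  "masked_attention_deriv A V Y H =
     (\<chi> i. V *v (\<Sum>j\<in>{j. j \<le> i}. masked_P_deriv A Y i j H *\<^sub>R Y$j + masked_P A Y i j *\<^sub>R H$j))"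

lemma has_derivative_attn_score:
  "((\<lambda>X. attn_score A X i j) has_derivative score_deriv A Y i j) (at Y)"
proof -
  have nth: "((\<lambda>X. X$k) has_derivative (\<lambda>H. H$k)) (at Y)" for k
    by (rule bounded_linear_imp_has_derivative[OF bounded_linear_vec_nth])
  have "((\<lambda>X. A *v X$i) has_derivative (\<lambda>H. A *v H$i)) (at Y)"
    by (rule bounded_linear.has_derivative[OF matrix_vector_mul_bounded_linear nth])
  from has_derivative_inner[OF this nth[of j]] show ?thesis
    by (simp add: attn_score_def score_deriv_def[abs_def] add.commute)
qed

lemma sum_exp_attn_score_pos:
  fixes Y :: "real^'d^('n::{finite,linorder})"
  shows "0 < (\<Sum>l\<in>{l. l \<le> i}. exp (attn_score A Y i l))"
  by (rule sum_pos) auto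

lemma has_derivative_masked_P:
  fixes Y :: "real^'d^('n::{finite,linorder})"
  shows "((\<lambda>X. masked_P A X i j) has_derivative masked_P_deriv A Y i j) (at Y)"
proof -
  define S where "S = (\<Sum>l\<in>{l. l \<le> i}. exp (attn_score A Y i l))"
  have "S > 0" unfolding S_def by (rule sum_exp_attn_score_pos)
  have exp: "((\<lambda>X. exp (attn_score A X i l)) has_derivative
      (\<lambda>H. score_deriv A Y i l H * exp (attn_score A Y i l))) (at Y)" for l
    by (rule has_derivative_exp[OF has_derivative_attn_score])
  have "((\<lambda>X. exp (attn_score A X i j) / (\<Sum>l\<in>{l. l \<le> i}. exp (attn_score A X i l))) has_derivative
      (\<lambda>H. - exp (attn_score A Y i j) * (inverse S * (\<Sum>l\<in>{l. l \<le> i}. score_deriv A Y i l H * exp (attn_score A Y i l)) * inverse S)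
        + score_deriv A Y i j H * exp (attn_score A Y i j) / S)) (at Y)"
    unfolding S_def by (intro has_derivative_divide exp has_derivative_sum) (use \<open>S > 0\<close> S_def in auto)
  moreover have "(\<lambda>H. - exp (attn_score A Y i j) * (inverse S * (\<Sum>l\<in>{l. l \<le> i}. score_deriv A Y i l H * exp (attn_score A Y i l)) * inverse S)
        + score_deriv A Y i j H * exp (attn_score A Y i j) / S) = masked_P_deriv A Y i j"
    using \<open>S > 0\<close>
    by (auto simp: fun_eq_iff masked_P_deriv_def masked_P_def S_def[symmetric] field_simps
        sum_distrib_left sum_divide_distrib[symmetric] mult.commute sum_negf)
  ultimately show ?thesis by (simp add: masked_P_def[abs_def])
qed

lemma has_derivative_masked_attention:
  "(masked_attention A V has_derivative masked_attention_deriv A V Y) (at Y)"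
proof -
  have "((\<lambda>X. masked_P A X i j *\<^sub>R X$j) has_derivative
      (\<lambda>H. masked_P_deriv A Y i j H *\<^sub>R Y$j + masked_P A Y i j *\<^sub>R H$j)) (at Y)" for i j
    using has_derivative_scaleR[OF has_derivative_masked_P
        bounded_linear_imp_has_derivative[OF bounded_linear_vec_nth]]
    by (simp add: add.commute)
  then show ?thesis
    unfolding masked_attention_def[abs_def] masked_attention_deriv_def[abs_def]
    by (intro has_derivative_vec_lambda has_derivative_sum
        bounded_linear.has_derivative[OF matrix_vector_mul_bounded_linear])
qed

section \<open>Bounding the derivative at scaled inputs\<close>

lemma masked_P_nonneg: "0 \<le> masked_P A Y i j"
  unfolding masked_P_def by (intro divide_nonneg_nonneg) (auto intro: sum_nonneg)

lemma sum_masked_P: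
  fixes Y :: "real^'d^('n::{finite,linorder})"
  shows "(\<Sum>l\<in>{l. l \<le> i}. masked_P A Y i l) = 1"
  using sum_exp_attn_score_pos[of A Y i] unfolding masked_P_def sum_divide_distrib[symmetric] by simp

lemma masked_P_le_exp_diff:
  fixes Y :: "real^'d^('n::{finite,linorder})"
  assumes "m \<le> i"
  shows "masked_P A Y i j \<le> exp (attn_score A Y i j - attn_score A Y i m)"
proof -
  have "exp (attn_score A Y i m) \<le> (\<Sum>l\<in>{l. l \<le> i}. exp (attn_score A Y i l))"
    by (rule member_le_sum) (use assms in auto)
  then show ?thesis
    unfolding masked_P_def exp_diff by (intro divide_left_mono) (auto intro: mult_pos_pos sum_exp_attn_score_pos)
qed

lemma masked_P_le_1:
  fixes Y :: "real^'d^('n::{finite,linorder})"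
  assumes "j \<le> i"
  shows "masked_P A Y i j \<le> 1"
  using masked_P_le_exp_diff[OF assms, of A Y j] by simp

lemma abs_score_deriv_le:
  assumes "\<And>k. norm (Y$k) \<le> B"
  shows "\<bar>score_deriv A Y i l H\<bar> \<le> 2 * spectral_norm A * norm H * B"
proof -
  have "0 \<le> B" using assms[of l] norm_ge_zero order_trans by blast
  have "\<bar>(A *v H$i) \<bullet> Y$l\<bar> \<le> norm (A *v H$i) * norm (Y$l)" by (rule Cauchy_Schwarz_ineq2)
  also have "\<dots> \<le> (spectral_norm A * norm H) * B"
    by (intro mult_mono order_trans[OF norm_matrix_vector_le] mult_left_mono Finite_Cartesian_Product.norm_nth_le assms)
       (auto intro: mult_nonneg_nonneg spectral_norm_nonneg)
  finally have 1: "\<bar>(A *v H$i) \<bullet> Y$l\<bar> \<le> spectral_norm A * norm H * B" .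
  have "\<bar>(A *v Y$i) \<bullet> H$l\<bar> \<le> norm (A *v Y$i) * norm (H$l)" by (rule Cauchy_Schwarz_ineq2)
  also have "\<dots> \<le> (spectral_norm A * B) * norm H"
    by (intro mult_mono order_trans[OF norm_matrix_vector_le] mult_left_mono Finite_Cartesian_Product.norm_nth_le assms)
       (auto intro: mult_nonneg_nonneg spectral_norm_nonneg \<open>0 \<le> B\<close> Finite_Cartesian_Product.norm_nth_le)
  finally have 2: "\<bar>(A *v Y$i) \<bullet> H$l\<bar> \<le> spectral_norm A * norm H * B"
    by (simp add: algebra_simps)
  show ?thesis unfolding score_deriv_def using 1 2 by linarith
qed

lemma masked_P_deriv_eq_sum:
  fixes Y :: "real^'d^('n::{finite,linorder})"
  shows "masked_P_deriv A Y i j H = (\<Sum>l\<in>{l. l \<le> i}.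
     masked_P A Y i j * masked_P A Y i l * (score_deriv A Y i j H - score_deriv A Y i l H))"
proof -
  have "(\<Sum>l\<in>{l. l \<le> i}. masked_P A Y i j * masked_P A Y i l * (score_deriv A Y i j H - score_deriv A Y i l H))
     = masked_P A Y i j * score_deriv A Y i j H * (\<Sum>l\<in>{l. l \<le> i}. masked_P A Y i l)
       - masked_P A Y i j * (\<Sum>l\<in>{l. l \<le> i}. masked_P A Y i l * score_deriv A Y i l H)"
    by (simp add: sum_distrib_left sum_subtractf algebra_simps)
  then show ?thesis by (simp add: masked_P_deriv_def sum_masked_P algebra_simps)
qed

lemma abs_masked_P_deriv_le:
  fixes Y :: "real^'d^('n::{finite,linorder})"
  assumes e: "\<And>l. l \<le> i \<Longrightarrow> l \<noteq> j \<Longrightarrow> masked_P A Y i j * masked_P A Y i l \<le> e"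
    and M: "\<And>l. \<bar>score_deriv A Y i l H\<bar> \<le> M" and "0 \<le> e"
  shows "\<bar>masked_P_deriv A Y i j H\<bar> \<le> 2 * real CARD('n) * e * M"
proof -
  have "0 \<le> M" using M[of i] by linarith
  have term_le: "\<bar>masked_P A Y i j * masked_P A Y i l * (score_deriv A Y i j H - score_deriv A Y i l H)\<bar>
      \<le> 2 * e * M" if "l \<le> i" for l
  proof (cases "l = j")
    case False
    have "\<bar>score_deriv A Y i j H - score_deriv A Y i l H\<bar> \<le> 2 * M" using M[of j] M[of l] by linarith
    moreover have "\<bar>masked_P A Y i j * masked_P A Y i l\<bar> \<le> e"
      using e[OF that False] masked_P_nonneg[of A Y i j] masked_P_nonneg[of A Y i l] by simp
    ultimately have "\<bar>masked_P A Y i j * masked_P A Y i l\<bar> * \<bar>score_deriv A Y i j H - score_deriv A Y i l H\<bar>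
        \<le> e * (2 * M)"
      using \<open>0 \<le> e\<close> by (intro mult_mono) auto
    then show ?thesis by (simp add: abs_mult mult_ac)
  qed (use \<open>0 \<le> e\<close> \<open>0 \<le> M\<close> in simp)
  have "\<bar>masked_P_deriv A Y i j H\<bar> \<le> (\<Sum>l\<in>{l. l \<le> i}. 2 * e * M)"
    unfolding masked_P_deriv_eq_sum by (rule order_trans[OF sum_abs sum_mono]) (use term_le in auto)
  also have "\<dots> \<le> real CARD('n) * (2 * e * M)"
    using \<open>0 \<le> e\<close> \<open>0 \<le> M\<close> by (simp add: mult_right_mono card_mono)
  finally show ?thesis by (simp add: mult_ac)
qed

lemma norm_masked_attention_deriv_le:
  fixes Y H :: "real^'d^('n::{finite,linorder})"
  assumes q: "\<And>i j. j \<le> i \<Longrightarrow> \<bar>masked_P_deriv A Y i j H\<bar> \<le> q"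
    and B: "\<And>k. norm (Y$k) \<le> B"
  shows "norm (masked_attention_deriv A V Y H)
    \<le> sqrt (real CARD('n)) * (spectral_norm V * (norm H + real CARD('n) * q * B))"
proof -
  have "0 \<le> q" using q[of undefined undefined] by auto
  have "0 \<le> B" using B[of undefined] norm_ge_zero order_trans by blast
  have "norm (V *v (\<Sum>j\<in>{j. j \<le> i}. masked_P_deriv A Y i j H *\<^sub>R Y$j + masked_P A Y i j *\<^sub>R H$j))
      \<le> spectral_norm V * (norm H + real CARD('n) * q * B)" for i
  proof -
    have "norm (\<Sum>j\<in>{j. j \<le> i}. masked_P_deriv A Y i j H *\<^sub>R Y$j + masked_P A Y i j *\<^sub>R H$j)
        \<le> (\<Sum>j\<in>{j. j \<le> i}. q * B + masked_P A Y i j * norm H)"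
      by (rule order_trans[OF norm_sum sum_mono])
        (auto intro!: order_trans[OF norm_triangle_ineq] add_mono mult_mono mult_left_mono q B
          Finite_Cartesian_Product.norm_nth_le simp: masked_P_nonneg \<open>0 \<le> q\<close>)
    also have "\<dots> = real (card {j. j \<le> i}) * q * B + norm H"
      by (simp add: sum.distrib sum_masked_P flip: sum_distrib_right)
    also have "\<dots> \<le> norm H + real CARD('n) * q * B"
      using \<open>0 \<le> q\<close> \<open>0 \<le> B\<close> by (simp add: mult_right_mono card_mono)
    finally show ?thesis
      by (rule order_trans[OF norm_matrix_vector_le mult_left_mono]) (rule spectral_norm_nonneg)
  qed
  then show ?thesis unfolding masked_attention_deriv_def by (intro norm_vec_le_sqrt_card) simp
qed

lemma attn_score_scaleR: "attn_score A (c *\<^sub>R X) i j = c\<^sup>2 * attn_score A X i j"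
  by (simp add: attn_score_def matrix_vector_mult_scaleR power2_eq_square)

lemma E_masked_score_gap:
  fixes X :: "real^'d^('n::{finite,linorder})"
  assumes "X \<in> E_masked A"
  obtains g m where "g > 0" "\<And>i. m i \<le> i"
    "\<And>i j. j \<le> i \<Longrightarrow> j \<noteq> m i \<Longrightarrow> attn_score A X i j + g \<le> attn_score A X i (m i)"
proof -
  let ?s = "attn_score A X"
  have "\<forall>i. \<exists>!j. j \<le> i \<and> (\<forall>l. l \<le> i \<longrightarrow> ?s i l \<le> ?s i j)"
    using assms unfolding E_masked_def by auto
  then obtain m where m: "\<And>i. m i \<le> i" "\<And>i l. l \<le> i \<Longrightarrow> ?s i l \<le> ?s i (m i)"
    and m_unique: "\<And>i j. j \<le> i \<Longrightarrow> (\<forall>l. l \<le> i \<longrightarrow> ?s i l \<le> ?s i j) \<Longrightarrow> j = m i"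
    by metis
  have strict: "?s i j < ?s i (m i)" if "j \<le> i" "j \<noteq> m i" for i j
    using m m_unique[OF that(1)] that by (metis order.order_iff_strict order.trans)
  define T where "T = (\<lambda>(i, j). ?s i (m i) - ?s i j) ` {(i, j). j \<le> i \<and> j \<noteq> m i}"
  have "finite T" unfolding T_def by simp
  show ?thesis
  proof
    show "Min (insert 1 T) > 0"
      using \<open>finite T\<close> by (subst Min_gr_iff) (auto simp: T_def intro: strict)
    show "?s i j + Min (insert 1 T) \<le> ?s i (m i)" if "j \<le> i" "j \<noteq> m i" for i j
    proof -
      have "Min (insert 1 T) \<le> ?s i (m i) - ?s i j"
        using \<open>finite T\<close> that by (intro Min_le) (auto simp: T_def)
      then show ?thesis by simp
    qed
  qed (rule m)
qed

lemma masked_P_mul_scaled_le: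
  fixes X :: "real^'d^('n::{finite,linorder})"
  assumes "m \<le> i"
    and gap: "\<And>k. k \<le> i \<Longrightarrow> k \<noteq> m \<Longrightarrow> attn_score A X i k + g \<le> attn_score A X i m"
    and "j \<le> i" "l \<le> i" "j \<noteq> l"
  shows "masked_P A (R *\<^sub>R X) i j * masked_P A (R *\<^sub>R X) i l \<le> exp (- g * R\<^sup>2)"
proof -
  have small: "masked_P A (R *\<^sub>R X) i k \<le> exp (- g * R\<^sup>2)" if "k \<le> i" "k \<noteq> m" for k
  proof -
    have "masked_P A (R *\<^sub>R X) i k \<le> exp (attn_score A (R *\<^sub>R X) i k - attn_score A (R *\<^sub>R X) i m)"
      by (rule masked_P_le_exp_diff[OF \<open>m \<le> i\<close>])
    also have "\<dots> = exp (R\<^sup>2 * (attn_score A X i k - attn_score A X i m))"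
      by (simp add: attn_score_scaleR algebra_simps)
    also have "\<dots> \<le> exp (- g * R\<^sup>2)"
      using mult_left_mono[OF gap[OF that], of "R\<^sup>2"] by (simp add: algebra_simps)
    finally show ?thesis .
  qed
  have le1: "masked_P A (R *\<^sub>R X) i k \<le> 1" if "k \<le> i" for k
    using masked_P_le_1[OF that] .
  show ?thesis
  proof (cases "j = m")
    case True
    then show ?thesis using small[of l] le1[of j] masked_P_nonneg[of A "R *\<^sub>R X" i l] assms(3-5)
      by (metis dual_order.trans mult_left_le_one_le masked_P_nonneg)
  next
    case False
    then show ?thesis using small[of j] le1[of l] masked_P_nonneg[of A "R *\<^sub>R X" i j] assms(3-5)
      by (metis dual_order.trans mult_right_le_one_le masked_P_nonneg)
  qed
qed

lemma power2_mul_exp_neg_le: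
  fixes g R :: real
  assumes "g > 0" and "R \<ge> 2 / g"
  shows "R\<^sup>2 * exp (- g * R\<^sup>2) \<le> 4 * exp (- R)"
proof -
  have "R > 0" using assms by (smt (verit) divide_pos_pos)
  have "g * R \<ge> 2" using assms by (simp add: field_simps)
  then have "g * R\<^sup>2 \<ge> 2 * R" using \<open>R > 0\<close> by (simp add: power2_eq_square algebra_simps)
  then have decay: "exp (- g * R\<^sup>2) \<le> exp (- 2 * R)" by simp
  have "R / 2 \<le> exp (R / 2)" using exp_ge_add_one_self[of "R / 2"] by linarith
  then have "(R / 2)\<^sup>2 \<le> (exp (R / 2))\<^sup>2" using \<open>R > 0\<close> by (intro power_mono) auto
  then have growth: "R\<^sup>2 \<le> 4 * exp R" by (simp add: power_divide power2_eq_square flip: exp_add)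
  have "R\<^sup>2 * exp (- g * R\<^sup>2) \<le> (4 * exp R) * exp (- 2 * R)"
    by (intro mult_mono decay growth) auto
  also have "\<dots> = 4 * exp (- R)" by (simp flip: exp_add)
  finally show ?thesis .
qed

lemma onorm_masked_attention_deriv_scaled_le:
  fixes X :: "real^'d^('n::{finite,linorder})"
  assumes X: "X \<in> unit_ball_seq" and "R \<ge> 0" and m: "\<And>i. m i \<le> i"
    and gap: "\<And>i j. j \<le> i \<Longrightarrow> j \<noteq> m i \<Longrightarrow> attn_score A X i j + g \<le> attn_score A X i (m i)"
  shows "onorm (masked_attention_deriv A V (R *\<^sub>R X))
    \<le> (1 + 4 * real CARD('n)^2 * spectral_norm A * R\<^sup>2 * exp (- g * R\<^sup>2))
      * spectral_norm V * sqrt (real CARD('n))"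
proof (rule onorm_bound)
  define n where "n = real CARD('n)"
  define e where "e = exp (- g * R\<^sup>2)"
  have "0 \<le> 4 * n^2 * spectral_norm A * R\<^sup>2 * e"
    unfolding e_def by (simp add: spectral_norm_nonneg)
  then show "0 \<le> (1 + 4 * real CARD('n)^2 * spectral_norm A * R\<^sup>2 * exp (- g * R\<^sup>2))
      * spectral_norm V * sqrt (real CARD('n))"
    unfolding n_def e_def by (simp add: spectral_norm_nonneg)
  fix H
  define Y where "Y = R *\<^sub>R X"
  have B: "norm (Y$k) \<le> R" for k
    using X \<open>R \<ge> 0\<close> unfolding Y_def unit_ball_seq_def by (simp add: mult_left_le)
  have "\<bar>masked_P_deriv A Y i j H\<bar> \<le> 2 * n * e * (2 * spectral_norm A * norm H * R)" if "j \<le> i" for i j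
    unfolding n_def e_def Y_def
    by (intro abs_masked_P_deriv_le masked_P_mul_scaled_le[OF m gap] abs_score_deriv_le)
      (use that B[unfolded Y_def] in auto)
  then have "norm (masked_attention_deriv A V Y H)
      \<le> sqrt n * (spectral_norm V * (norm H + n * (2 * n * e * (2 * spectral_norm A * norm H * R)) * R))"
    unfolding n_def by (intro norm_masked_attention_deriv_le B)
  also have "\<dots> = (1 + 4 * n^2 * spectral_norm A * R\<^sup>2 * e) * spectral_norm V * sqrt n * norm H"
    by (simp add: algebra_simps power2_eq_square)
  finally show "norm (masked_attention_deriv A V (R *\<^sub>R X) H)
      \<le> (1 + 4 * real CARD('n)^2 * spectral_norm A * R\<^sup>2 * exp (- g * R\<^sup>2))
        * spectral_norm V * sqrt (real CARD('n)) * norm H"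
    unfolding Y_def n_def e_def .
qed

lemma masked_attention_derivative_bound_on_ray:
  fixes A :: "real^'d^'d" and V :: "real^'d^'k" and X :: "real^'d^('n::{finite,linorder})"
  assumes X: "X \<in> E_masked A"
  shows "\<exists>\<theta> :: real \<Rightarrow> real.
           (\<forall>R\<ge>0. \<theta> R \<ge> 0)
         \<and> (\<exists>C c. c > 0 \<and> (\<forall>\<^sub>F R in at_top. \<bar>\<theta> R - 1\<bar> \<le> C * exp (- c * R)))
         \<and> (\<forall>R\<ge>0. masked_attention A V differentiable (at (R *\<^sub>R X))
               \<and> onorm (frechet_derivative (masked_attention A V) (at (R *\<^sub>R X)))
                   \<le> \<theta> R * spectral_norm V * sqrt (real CARD('n)))"
proof -
  obtain g m where "g > 0" and m: "\<And>i. m i \<le> i"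
    and gap: "\<And>i j. j \<le> i \<Longrightarrow> j \<noteq> m i \<Longrightarrow> attn_score A X i j + g \<le> attn_score A X i (m i)"
    using E_masked_score_gap[OF X] by blast
  have "X \<in> unit_ball_seq" using X unfolding E_masked_def by blast
  define K where "K = 4 * real CARD('n)^2 * spectral_norm A"
  define \<theta> where "\<theta> R = 1 + K * R\<^sup>2 * exp (- g * R\<^sup>2)" for R
  have "K \<ge> 0" unfolding K_def by (simp add: spectral_norm_nonneg)
  show ?thesis
  proof (intro exI[of _ \<theta>] conjI allI impI)
    show "0 \<le> \<theta> R" for R
      unfolding \<theta>_def using \<open>K \<ge> 0\<close> by (simp add: add_nonneg_nonneg)
    show "\<exists>C c. c > 0 \<and> (\<forall>\<^sub>F R in at_top. \<bar>\<theta> R - 1\<bar> \<le> C * exp (- c * R))"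
    proof (intro exI conjI)
      show "(1::real) > 0" by simp
      show "\<forall>\<^sub>F R in at_top. \<bar>\<theta> R - 1\<bar> \<le> 4 * K * exp (- 1 * R)"
        using eventually_ge_at_top[of "2 / g"]
      proof eventually_elim
        case (elim R)
        have "\<bar>\<theta> R - 1\<bar> = K * (R\<^sup>2 * exp (- g * R\<^sup>2))"
          unfolding \<theta>_def using \<open>K \<ge> 0\<close> by simp
        also have "\<dots> \<le> K * (4 * exp (- R))"
          using power2_mul_exp_neg_le[OF \<open>g > 0\<close> elim] \<open>K \<ge> 0\<close> by (rule mult_left_mono)
        finally show ?case by simp
      qed
    qed
    fix R :: real
    assume "R \<ge> 0"
    show "masked_attention A V differentiable (at (R *\<^sub>R X))"
      by (rule differentiableI[OF has_derivative_masked_attention])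
    show "onorm (frechet_derivative (masked_attention A V) (at (R *\<^sub>R X)))
        \<le> \<theta> R * spectral_norm V * sqrt (real CARD('n))"
      using onorm_masked_attention_deriv_scaled_le[OF \<open>X \<in> unit_ball_seq\<close> \<open>R \<ge> 0\<close> m gap]
      unfolding frechet_derivative_at[OF has_derivative_masked_attention, symmetric] \<theta>_def K_def .
  qed
qed

section \<open>Ties of attention scores are negligible\<close>

lemma continuous_on_attn_score: "continuous_on UNIV (\<lambda>X. attn_score A X i j)"
  by (rule has_derivative_continuous_on) (use has_derivative_attn_score in blast)

text \<open>Along the ray \<open>a + t x\<close> from \<open>a = axis l (-w)\<close>, the score difference equals
  \<open>t G(x) + t\<^sup>2 \<beta>\<close> with \<open>G(X) = (A x\<^sub>i) \<bullet> w\<close> and \<open>G(a + t x) = t G(x)\<close>; so away from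
  \<open>G = 0\<close> each ray meets the tie set at most once.\<close>

lemma negligible_score_tie_off_hyperplane:
  fixes A :: "real^'d^'d" and w :: "real^'d"
  assumes "j \<noteq> l" "l \<noteq> i" "r > 0"
  shows "negligible {X :: real^'d^'n. attn_score A X i j = attn_score A X i l \<and> r \<le> \<bar>(A *v X$i) \<bullet> w\<bar>}"
    (is "negligible ?S")
proof (rule starlike_negligible)
  define G where "G X = (A *v X$i) \<bullet> w" for X :: "real^'d^'n"
  define Phi where "Phi X = attn_score A X i j - attn_score A X i l" for X :: "real^'d^'n"
  have "continuous_on UNIV (\<lambda>X :: real^'d^'n. A *v X$i)"
    by (intro linear_continuous_on bounded_linear_compose[OF matrix_vector_mul_bounded_linear
        bounded_linear_vec_nth])
  then have "continuous_on UNIV G" unfolding G_def by (intro continuous_intros)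
  moreover have "continuous_on UNIV Phi" unfolding Phi_def by (intro continuous_intros continuous_on_attn_score)
  moreover have "?S = {X. Phi X = 0} \<inter> {X. r \<le> \<bar>G X\<bar>}" unfolding Phi_def G_def by auto
  ultimately show "closed ?S"
    by (auto intro!: closed_Int closed_Collect_eq closed_Collect_le continuous_intros)
  fix c and x :: "real^'d^'n"
  assume c_in: "axis l (- w) + c *\<^sub>R x \<in> ?S" and "0 \<le> c" and one_in: "axis l (- w) + x \<in> ?S"
  have ray_i: "(axis l (- w) + t *\<^sub>R x)$i = t *\<^sub>R x$i"
    and ray_j: "(axis l (- w) + t *\<^sub>R x)$j = t *\<^sub>R x$j"
    and ray_l: "(axis l (- w) + t *\<^sub>R x)$l = t *\<^sub>R x$l - w" for t
    using assms by (simp_all add: axis_def)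
  define \<beta> where "\<beta> = (A *v x$i) \<bullet> (x$j - x$l)"
  have G_ray: "G (axis l (- w) + t *\<^sub>R x) = t * G x" for t
    unfolding G_def ray_i by (simp add: matrix_vector_mult_scaleR)
  have Phi_ray: "Phi (axis l (- w) + t *\<^sub>R x) = t * G x + t\<^sup>2 * \<beta>" for t
    unfolding Phi_def attn_score_def G_def \<beta>_def ray_i ray_j ray_l
    by (simp add: matrix_vector_mult_scaleR inner_diff_right power2_eq_square algebra_simps)
  have "c * G x \<noteq> 0" using c_in \<open>r > 0\<close> G_ray[of c] unfolding G_def by auto
  then have "c \<noteq> 0" "G x \<noteq> 0" by auto
  have "c * (G x + c * \<beta>) = 0"
    using c_in Phi_ray[of c] unfolding Phi_def by (simp add: power2_eq_square algebra_simps)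
  then have "G x + c * \<beta> = 0" using \<open>c \<noteq> 0\<close> by simp
  moreover have "G x + \<beta> = 0" using one_in Phi_ray[of 1] unfolding Phi_def by simp
  moreover have "(c - 1) * \<beta> = (G x + c * \<beta>) - (G x + \<beta>)" by (simp add: algebra_simps)
  ultimately have "(c - 1) * \<beta> = 0" by simp
  moreover have "\<beta> \<noteq> 0" using \<open>G x + \<beta> = 0\<close> \<open>G x \<noteq> 0\<close> by simp
  ultimately show "c = 1" by simp
qed

lemma negligible_score_tie:
  fixes A :: "real^'d^'d"
  assumes "A \<noteq> 0" and "j \<noteq> l"
  shows "negligible {X :: real^'d^'n. attn_score A X i j = attn_score A X i l}"
proof -
  have off_i: "negligible {X :: real^'d^'n. attn_score A X i j' = attn_score A X i l'}"
    if "j' \<noteq> l'" "l' \<noteq> i" for j' l'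
  proof -
    obtain u where "A *v u \<noteq> 0" using \<open>A \<noteq> 0\<close> matrix_eq[of A 0] by auto
    define w where "w = A *v u"
    define b :: "real^'d^'n" where "b = axis i (w v* A)"
    have G_inner: "(A *v X$i) \<bullet> w = b \<bullet> X" for X :: "real^'d^'n"
      unfolding b_def inner_axis' dot_lmul_matrix by (simp add: inner_commute)
    have "b \<noteq> 0"
      using G_inner[of "axis i u"] \<open>A *v u \<noteq> 0\<close> unfolding w_def by auto
    then have "negligible {X :: real^'d^'n. (A *v X$i) \<bullet> w = 0}"
      unfolding G_inner using negligible_hyperplane[of b 0] by simp
    moreover define S where "S k = {X :: real^'d^'n. attn_score A X i j' = attn_score A X i l'
        \<and> inverse (real (Suc k)) \<le> \<bar>(A *v X$i) \<bullet> w\<bar>}" for k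
    have "negligible (\<Union>k. S k)"
      unfolding S_def using that by (intro negligible_Union_nat negligible_score_tie_off_hyperplane) auto
    moreover have "{X. attn_score A X i j' = attn_score A X i l'}
        \<subseteq> {X. (A *v X$i) \<bullet> w = 0} \<union> (\<Union>k. S k)"
    proof
      fix X :: "real^'d^'n"
      assume tie: "X \<in> {X. attn_score A X i j' = attn_score A X i l'}"
      show "X \<in> {X. (A *v X$i) \<bullet> w = 0} \<union> (\<Union>k. S k)"
      proof (cases "(A *v X$i) \<bullet> w = 0")
        case False
        then obtain k where "inverse (real (Suc k)) < \<bar>(A *v X$i) \<bullet> w\<bar>"
          using reals_Archimedean[of "\<bar>(A *v X$i) \<bullet> w\<bar>"] by auto
        with tie have "X \<in> S k" unfolding S_def by simp
        then show ?thesis by blast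
      qed simp
    qed
    ultimately show ?thesis by (meson negligible_Un negligible_subset)
  qed
  show ?thesis
  proof (cases "l = i")
    case True
    with off_i[of l j] assms(2) show ?thesis by (simp add: eq_commute)
  qed (use off_i assms(2) in blast)
qed

lemma null_sets_unit_ball_seq_diff_E_masked:
  fixes A :: "real^'d^'d"
  assumes "A \<noteq> 0"
  shows "(unit_ball_seq - (E_masked A :: (real^'d^('n::{finite,linorder})) set)) \<in> null_sets lebesgue"
proof -
  define Z where "Z = (\<lambda>(i, j, l). {X :: real^'d^('n::{finite,linorder}). attn_score A X i j = attn_score A X i l})"
  have "unit_ball_seq - E_masked A \<subseteq> \<Union>(Z ` {(i, j, l). j \<noteq> l})"
  proof
    fix X :: "real^'d^('n::{finite,linorder})"
    assume "X \<in> unit_ball_seq - E_masked A"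
    then obtain i where no_unique:
      "\<not> (\<exists>!j. j \<le> i \<and> (\<forall>l. l \<le> i \<longrightarrow> attn_score A X i l \<le> attn_score A X i j))"
      unfolding E_masked_def by blast
    have "Max (attn_score A X i ` {l. l \<le> i}) \<in> attn_score A X i ` {l. l \<le> i}"
      by (rule Max_in) auto
    then obtain j where "j \<le> i" "attn_score A X i j = Max (attn_score A X i ` {l. l \<le> i})"
      by auto
    then have j: "j \<le> i" "\<forall>l. l \<le> i \<longrightarrow> attn_score A X i l \<le> attn_score A X i j"
      by auto
    then obtain l where "l \<le> i" "\<forall>l'. l' \<le> i \<longrightarrow> attn_score A X i l' \<le> attn_score A X i l" "l \<noteq> j"
      using no_unique by blast
    with j have "X \<in> Z (i, j, l)" unfolding Z_def by (simp add: order_antisym)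
    with \<open>l \<noteq> j\<close> show "X \<in> \<Union>(Z ` {(i, j, l). j \<noteq> l})" by blast
  qed
  moreover have "negligible (\<Union>(Z ` {(i, j, l). j \<noteq> l}))"
    by (rule negligible_Union) (auto simp: Z_def intro!: negligible_score_tie[OF assms])
  ultimately show ?thesis by (simp add: negligible_iff_null_sets[symmetric] negligible_subset)
qed

theorem mainTheorem12:
  fixes A :: "real^'d^'d" and V :: "real^'d^'k"
  assumes "A \<noteq> 0" and "V \<noteq> 0"
  shows "(unit_ball_seq - (E_masked A :: (real^'d^('n::{finite,linorder})) set)) \<in> null_sets lebesgue
    \<and> (\<forall>X \<in> (E_masked A :: (real^'d^('n::{finite,linorder})) set).
         \<exists>\<theta> :: real \<Rightarrow> real.
           (\<forall>R\<ge>0. \<theta> R \<ge> 0)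
         \<and> (\<exists>C c. c > 0 \<and> (\<forall>\<^sub>F R in at_top. \<bar>\<theta> R - 1\<bar> \<le> C * exp (- c * R)))
         \<and> (\<forall>R\<ge>0. masked_attention A V differentiable (at (R *\<^sub>R X))
               \<and> onorm (frechet_derivative (masked_attention A V) (at (R *\<^sub>R X)))
                   \<le> \<theta> R * spectral_norm V * sqrt (real CARD('n))))"
  using null_sets_unit_ball_seq_diff_E_masked[OF \<open>A \<noteq> 0\<close>] masked_attention_derivative_bound_on_ray by blast

end
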